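(* Let $n_i\le r_i$ ($i=1,2$) be nonnegative integers and let $(X_{1,1},\dots,X_{1,n_1},X_{2,1},\dots,X_{2,n_2})$ be $\{0,1\}$-valued and $(n_1,n_2)$-DFPE, with associated point $w=(w_{l_1,l_2})_{(l_1,l_2)\ne(0,0),\,0\le l_i\le n_i}$. Then the sequence is $(r_1,r_2)$-extendible if and only if $w\in\operatorname{conv}\{\lambda^{(n_1,n_2)}_{k_1,k_2;\,r_1,r_2}:0\le k_1\le r_1,\ 0\le k_2\le r_2\}$.
   Context: A family $(X_{1,1},\dots,X_{1,n_1},X_{2,1},\dots,X_{2,n_2})$ of random variables is $(n_1,n_2)$-DFPE (partially exchangeable in the sense of de Finetti) if its joint law is invariant under any permutation of the indices $1,\dots,n_1$ of the first group together with any permutation of the indices $1,\dots,n_2$ of the second group. For such a $\{0,1\}$-valued family set $w_{l_1,l_2}=P(X_{1,1}=\dots=X_{1,l_1}=1,\ X_{2,1}=\dots=X_{2,l_2}=1)$ for $0\le l_i\le n_i$. The family is $(r_1,r_2)$-extendible ($r_i\ge n_i$) if there is an $(r_1,r_2)$-DFPE $\{0,1\}$-valued family $(Y_{1,1},\dots,Y_{1,r_1},Y_{2,1},\dots,Y_{2,r_2})$ such that $(Y_{1,1},\dots,Y_{1,n_1},Y_{2,1},\dots,Y_{2,n_2})$ has the same law as the original family. For integers $m$ and $k\ge0$, $(m)_k=m(m-1)\cdots(m-k+1)$, $(m)_0=1$. For $0\le k_i\le r_i$, $\lambda^{(n_1,n_2)}_{k_1,k_2;\,r_1,r_2}$ is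 the point with the same coordinate indexing as $w$ whose $(l_1,l_2)$-coordinate is $\dfrac{(k_1)_{l_1}(k_2)_{l_2}}{(r_1)_{l_1}(r_2)_{l_2}}$. *)

theory Defs
  imports "HOL-Analysis.Analysis" "HOL-Probability.Probability" "HOL-Library.Function_Algebras"
begin

(* Pointwise real vector space structure on functions, so that points
   indexed by (l1,l2) can be treated as elements of a real vector space
   and the library's  convex hull  applies. *)
instantiation "fun" :: (type, real_vector) real_vector
begin
definition scaleR_fun :: "real \<Rightarrow> ('a \<Rightarrow> 'b) \<Rightarrow> 'a \<Rightarrow> 'b"
  where "scaleR_fun r f = (\<lambda>x. r *\<^sub>R f x)"
instance
  by standard (auto simp: scaleR_fun_def fun_eq_iff scaleR_add_right scaleR_add_left)
end

(* A joint configuration of a {0,1}-valued family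
   (X_{1,1},...,X_{1,n1},X_{2,1},...,X_{2,n2}) is a pair (a,b) of
   functions nat => bool, a j = value of X_{1,j+1}, b j = value of X_{2,j+1}
   (0-based indices); coordinates beyond n1 resp. n2 are fixed to False. *)
definition configs :: "nat \<Rightarrow> nat \<Rightarrow> ((nat \<Rightarrow> bool) \<times> (nat \<Rightarrow> bool)) set" where
  "configs n1 n2 = {(a, b). (\<forall>j\<ge>n1. \<not> a j) \<and> (\<forall>j\<ge>n2. \<not> b j)}"

definition DFPE :: "nat \<Rightarrow> nat \<Rightarrow> ((nat \<Rightarrow> bool) \<times> (nat \<Rightarrow> bool)) pmf \<Rightarrow> bool" where
  "DFPE n1 n2 p \<longleftrightarrow> set_pmf p \<subseteq> configs n1 n2 \<and>
     (\<forall>\<sigma>1 \<sigma>2. \<sigma>1 permutes {..<n1} \<longrightarrow> \<sigma>2 permutes {..<n2} \<longrightarrow>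
        map_pmf (\<lambda>(a, b). (a \<circ> \<sigma>1, b \<circ> \<sigma>2)) p = p)"

definition wcoord :: "((nat \<Rightarrow> bool) \<times> (nat \<Rightarrow> bool)) pmf \<Rightarrow> nat \<Rightarrow> nat \<Rightarrow> real" where
  "wcoord p l1 l2 = measure_pmf.prob p {(a, b). (\<forall>j<l1. a j) \<and> (\<forall>j<l2. b j)}"

definition idx :: "nat \<Rightarrow> nat \<Rightarrow> (nat \<times> nat) set" where
  "idx n1 n2 = {(l1, l2). l1 \<le> n1 \<and> l2 \<le> n2 \<and> (l1, l2) \<noteq> (0, 0)}"

definition wpoint :: "nat \<Rightarrow> nat \<Rightarrow> ((nat \<Rightarrow> bool) \<times> (nat \<Rightarrow> bool)) pmf \<Rightarrow> (nat \<times> nat \<Rightarrow> real)" where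
  "wpoint n1 n2 p = (\<lambda>(l1, l2). if (l1, l2) \<in> idx n1 n2 then wcoord p l1 l2 else 0)"

definition ffac :: "int \<Rightarrow> nat \<Rightarrow> real" where
  "ffac m k = (\<Prod>i<k. real_of_int (m - int i))"

definition lambdapt :: "nat \<Rightarrow> nat \<Rightarrow> nat \<Rightarrow> nat \<Rightarrow> nat \<Rightarrow> nat \<Rightarrow> (nat \<times> nat \<Rightarrow> real)" where
  "lambdapt n1 n2 k1 k2 r1 r2 = (\<lambda>(l1, l2). if (l1, l2) \<in> idx n1 n2 then
      (ffac (int k1) l1 * ffac (int k2) l2) / (ffac (int r1) l1 * ffac (int r2) l2) else 0)"

definition restr :: "nat \<Rightarrow> nat \<Rightarrow> (nat \<Rightarrow> bool) \<times> (nat \<Rightarrow> bool) \<Rightarrow> (nat \<Rightarrow> bool) \<times> (nat \<Rightarrow> bool)" where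
  "restr n1 n2 = (\<lambda>(a, b). (\<lambda>j. j < n1 \<and> a j, \<lambda>j. j < n2 \<and> b j))"

definition extendible :: "nat \<Rightarrow> nat \<Rightarrow> nat \<Rightarrow> nat \<Rightarrow> ((nat \<Rightarrow> bool) \<times> (nat \<Rightarrow> bool)) pmf \<Rightarrow> bool" where
  "extendible n1 n2 r1 r2 p \<longleftrightarrow>
     (\<exists>q. DFPE r1 r2 q \<and> map_pmf (restr n1 n2) q = p)"

end

theory Submission
  imports Defs
begin

(* The extreme (r1,r2)-DFPE laws are the urn laws  urn r1 r2 (k1,k2) : the uniform
   distribution on the configurations with exactly k1 ones in the first group and k2
   ones in the second.  Counting the k-subsets of {..<r} that contain {..<l} shows that
   the w-point of the (n1,n2)-marginal of  urn r1 r2 (k1,k2)  is lambda_{k1,k2;r1,r2}.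
   Conversely, an (r1,r2)-DFPE law is constant on each such layer, hence it is the
   mixture of the urn laws weighted by the probabilities of the layers; so the w-point
   of any extendible law is a convex combination of the lambda points.  For the converse
   direction a convex combination of lambda points is realised by the corresponding
   mixture of urn laws, whose marginal has the prescribed w-point; it coincides with the
   given law because an (n1,n2)-DFPE law is determined by its w-point: invariance turns
   the probability of every cylinder event into a w-coordinate, and the point masses are
   recovered from the cylinder probabilities by induction on the number of zeros. *)

definition ksubsets :: "nat \<Rightarrow> nat \<Rightarrow> nat set set" where
  "ksubsets r k = {A. A \<subseteq> {..<r} \<and> card A = k}"

definition ksubsets_from :: "nat \<Rightarrow> nat \<Rightarrow> nat \<Rightarrow> nat set set" where
  "ksubsets_from r k l = {A \<in> ksubsets r k. {..<l} \<subseteq> A}"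

lemma ffac_mult_fact: "l \<le> k \<Longrightarrow> ffac (int k) l * fact (k - l) = fact k"
proof (induction l)
  case 0
  then show ?case by (simp add: ffac_def)
next
  case (Suc l)
  have "k - l = Suc (k - Suc l)" using Suc.prems by auto
  then have "fact (k - l) = real (k - l) * fact (k - Suc l)" by (metis fact_Suc of_nat_Suc)
  moreover have "ffac (int k) (Suc l) = ffac (int k) l * real (k - l)"
    using Suc.prems by (simp add: ffac_def of_nat_diff)
  ultimately show ?case using Suc by simp
qed

lemma ffac_eq_0: "k < l \<Longrightarrow> ffac (int k) l = 0"
  unfolding ffac_def by (rule prod_zero) auto

lemma ffac_neq_0: "l \<le> r \<Longrightarrow> ffac (int r) l \<noteq> 0"
  unfolding ffac_def by auto

lemma card_ksubsets: "card (ksubsets r k) = r choose k"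
  unfolding ksubsets_def using n_subsets[of "{..<r}" k] by simp

(* Removing the forced initial segment is a bijection onto the (k-l)-subsets of {l..<r}. *)
lemma card_ksubsets_from:
  assumes "l \<le> k" "l \<le> r"
  shows "card (ksubsets_from r k l) = (r - l) choose (k - l)"
proof -
  let ?B = "{B. B \<subseteq> {l..<r} \<and> card B = k - l}"
  have "bij_betw (\<lambda>A. A - {..<l}) (ksubsets_from r k l) ?B"
  proof (rule bij_betw_byWitness[where f' = "\<lambda>B. B \<union> {..<l}"])
    show "\<forall>A\<in>ksubsets_from r k l. A - {..<l} \<union> {..<l} = A"
      unfolding ksubsets_from_def by auto
    show "\<forall>B\<in>?B. B \<union> {..<l} - {..<l} = B" by auto
    have "A - {..<l} \<in> ?B" if "A \<in> ksubsets_from r k l" for A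
    proof -
      have "finite A" "A \<subseteq> {..<r}" "card A = k" "{..<l} \<subseteq> A"
        using that finite_subset[of A "{..<r}"] unfolding ksubsets_from_def ksubsets_def by auto
      then show ?thesis by (auto simp: card_Diff_subset)
    qed
    then show "(\<lambda>A. A - {..<l}) ` ksubsets_from r k l \<subseteq> ?B" by blast
    have "card (B \<union> {..<l}) = k" if "B \<in> ?B" for B
      using that assms finite_subset[of B "{l..<r}"]
      by (subst card_Un_disjoint) auto
    then show "(\<lambda>B. B \<union> {..<l}) ` ?B \<subseteq> ksubsets_from r k l"
      unfolding ksubsets_from_def ksubsets_def using assms by auto
  qed
  then have "card (ksubsets_from r k l) = card ?B" by (rule bij_betw_same_card)
  also have "\<dots> = (r - l) choose (k - l)" using n_subsets[of "{l..<r}" "k - l"] by simp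
  finally show ?thesis .
qed

lemma ksubsets_from_ratio:
  assumes "k \<le> r" "l \<le> r"
  shows "real (card (ksubsets_from r k l)) / real (card (ksubsets r k))
           = ffac (int k) l / ffac (int r) l"
proof (cases "l \<le> k")
  case False
  then have "ksubsets_from r k l = {}"
    unfolding ksubsets_from_def ksubsets_def
    using card_mono[of _ "{..<l}"] finite_subset[of _ "{..<r}"] by force
  then show ?thesis using False ffac_eq_0[of k l] by simp
next
  case True
  have "k - l \<le> r - l" "r - l - (k - l) = r - k" using True assms by auto
  then have "real (card (ksubsets_from r k l)) = fact (r - l) / (fact (k - l) * fact (r - k))"
    using card_ksubsets_from[OF True assms(2)] binomial_fact[of "k - l" "r - l"] by simp
  moreover have "real (card (ksubsets r k)) = fact r / (fact k * fact (r - k))"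
    using card_ksubsets binomial_fact[OF assms(1)] by simp
  ultimately show ?thesis
    using ffac_neq_0[OF assms(2)] ffac_mult_fact[OF True, symmetric] ffac_mult_fact[OF assms(2), symmetric]
    by (simp add: field_simps)
qed


definition cfg :: "nat set \<Rightarrow> nat set \<Rightarrow> (nat \<Rightarrow> bool) \<times> (nat \<Rightarrow> bool)" where
  "cfg A B = ((\<lambda>j. j \<in> A), (\<lambda>j. j \<in> B))"

definition counts :: "(nat \<Rightarrow> bool) \<times> (nat \<Rightarrow> bool) \<Rightarrow> nat \<times> nat" where
  "counts x = (card (Collect (fst x)), card (Collect (snd x)))"

definition layer :: "nat \<Rightarrow> nat \<Rightarrow> nat \<times> nat \<Rightarrow> ((nat \<Rightarrow> bool) \<times> (nat \<Rightarrow> bool)) set" where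
  "layer r1 r2 k = {x \<in> configs r1 r2. counts x = k}"

(* Urn law: drawing all balls without replacement from two urns of sizes r1, r2 holding
   k = (k1,k2) white balls, i.e. the uniform law on a layer. *)
definition urn :: "nat \<Rightarrow> nat \<Rightarrow> nat \<times> nat \<Rightarrow> ((nat \<Rightarrow> bool) \<times> (nat \<Rightarrow> bool)) pmf" where
  "urn r1 r2 k = pmf_of_set (layer r1 r2 k)"

definition ones :: "nat set \<Rightarrow> nat set \<Rightarrow> ((nat \<Rightarrow> bool) \<times> (nat \<Rightarrow> bool)) set" where
  "ones S1 S2 = {(a, b). (\<forall>j\<in>S1. a j) \<and> (\<forall>j\<in>S2. b j)}"

lemma wcoord_ones: "wcoord p l1 l2 = measure_pmf.prob p (ones {..<l1} {..<l2})"
  unfolding wcoord_def ones_def by (simp add: Ball_def)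

lemma inj_cfg: "inj_on (\<lambda>(A, B). cfg A B) X"
  by (auto simp: inj_on_def cfg_def fun_eq_iff)

lemma configs_iff: "(a, b) \<in> configs n1 n2 \<longleftrightarrow> Collect a \<subseteq> {..<n1} \<and> Collect b \<subseteq> {..<n2}"
  unfolding configs_def by (auto simp: subset_iff not_less[symmetric])

lemma configs_eq: "configs n1 n2 = (\<lambda>(A, B). cfg A B) ` (Pow {..<n1} \<times> Pow {..<n2})"
proof (intro equalityI subsetI)
  fix x assume "x \<in> configs n1 n2"
  moreover obtain a b where "x = (a, b)" by (cases x)
  ultimately show "x \<in> (\<lambda>(A, B). cfg A B) ` (Pow {..<n1} \<times> Pow {..<n2})"
    by (intro image_eqI[of _ _ "(Collect a, Collect b)"]) (auto simp: cfg_def configs_iff)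
qed (auto simp: cfg_def configs_iff)

lemma finite_configs: "finite (configs n1 n2)"
  unfolding configs_eq by auto

lemma counts_cfg: "counts (cfg A B) = (card A, card B)"
  by (simp add: counts_def cfg_def)

lemma layer_eq: "layer r1 r2 (k1, k2) = (\<lambda>(A, B). cfg A B) ` (ksubsets r1 k1 \<times> ksubsets r2 k2)"
proof -
  have "layer r1 r2 (k1, k2) = {x \<in> (\<lambda>(A, B). cfg A B) ` (Pow {..<r1} \<times> Pow {..<r2}). counts x = (k1, k2)}"
    unfolding layer_def configs_eq ..
  also have "\<dots> = (\<lambda>(A, B). cfg A B) ` (ksubsets r1 k1 \<times> ksubsets r2 k2)"
    unfolding ksubsets_def by (auto simp: counts_cfg)
  finally show ?thesis .
qed

lemma layer_ones_eq:
  "layer r1 r2 (k1, k2) \<inter> ones {..<l1} {..<l2}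
     = (\<lambda>(A, B). cfg A B) ` (ksubsets_from r1 k1 l1 \<times> ksubsets_from r2 k2 l2)"
proof -
  have "cfg A B \<in> ones T1 T2 \<longleftrightarrow> T1 \<subseteq> A \<and> T2 \<subseteq> B" for A B T1 T2
    by (auto simp: cfg_def ones_def)
  then show ?thesis unfolding layer_eq ksubsets_from_def by auto
qed

lemma finite_layer: "finite (layer r1 r2 k)"
  using finite_configs unfolding layer_def by simp

lemma layer_nonempty:
  assumes "k1 \<le> r1" "k2 \<le> r2"
  shows "layer r1 r2 (k1, k2) \<noteq> {}"
proof -
  have "({..<k1}, {..<k2}) \<in> ksubsets r1 k1 \<times> ksubsets r2 k2"
    unfolding ksubsets_def using assms by auto
  then show ?thesis unfolding layer_eq by blast
qed

lemma set_pmf_urn: "k1 \<le> r1 \<Longrightarrow> k2 \<le> r2 \<Longrightarrow> set_pmf (urn r1 r2 (k1, k2)) = layer r1 r2 (k1, k2)"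
  unfolding urn_def using layer_nonempty finite_layer by simp

lemma prob_urn_ones:
  assumes "k1 \<le> r1" "k2 \<le> r2" "l1 \<le> r1" "l2 \<le> r2"
  shows "measure_pmf.prob (urn r1 r2 (k1, k2)) (ones {..<l1} {..<l2})
           = ffac (int k1) l1 * ffac (int k2) l2 / (ffac (int r1) l1 * ffac (int r2) l2)"
proof -
  have "measure_pmf.prob (urn r1 r2 (k1, k2)) (ones {..<l1} {..<l2})
      = real (card (layer r1 r2 (k1, k2) \<inter> ones {..<l1} {..<l2})) / real (card (layer r1 r2 (k1, k2)))"
    unfolding urn_def using layer_nonempty[OF assms(1,2)] finite_layer
    by (simp add: measure_pmf_of_set)
  also have "\<dots> = real (card (ksubsets_from r1 k1 l1) * card (ksubsets_from r2 k2 l2))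
        / real (card (ksubsets r1 k1) * card (ksubsets r2 k2))"
    unfolding layer_ones_eq by (simp add: layer_eq card_image[OF inj_cfg] card_cartesian_product)
  also have "\<dots> = ffac (int k1) l1 * ffac (int k2) l2 / (ffac (int r1) l1 * ffac (int r2) l2)"
    using ksubsets_from_ratio[OF assms(1,3)] ksubsets_from_ratio[OF assms(2,4)]
    by (metis of_nat_mult times_divide_times_eq)
  finally show ?thesis .
qed


definition act :: "(nat \<Rightarrow> nat) \<Rightarrow> (nat \<Rightarrow> nat) \<Rightarrow>
    (nat \<Rightarrow> bool) \<times> (nat \<Rightarrow> bool) \<Rightarrow> (nat \<Rightarrow> bool) \<times> (nat \<Rightarrow> bool)" where
  "act s1 s2 = (\<lambda>(a, b). (a \<circ> s1, b \<circ> s2))"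

lemma DFPE_act:
  "DFPE n1 n2 p \<Longrightarrow> s1 permutes {..<n1} \<Longrightarrow> s2 permutes {..<n2} \<Longrightarrow> map_pmf (act s1 s2) p = p"
  unfolding DFPE_def act_def by blast

lemma act_cfg: "act s1 s2 (cfg A B) = cfg (s1 -` A) (s2 -` B)"
  by (simp add: act_def cfg_def o_def)

lemma act_preimage_ones: "act s1 s2 -` ones T1 T2 = ones (s1 ` T1) (s2 ` T2)"
  by (auto simp: act_def ones_def)

(* Acting by permutations is injective, which turns invariance of a law into
   invariance of its point masses. *)
lemma inj_act:
  assumes "s1 permutes D1" "s2 permutes D2"
  shows "inj (act s1 s2)"
proof (rule injI)
  fix x y assume "act s1 s2 x = act s1 s2 y"
  then have "act (inv s1) (inv s2) (act s1 s2 x) = act (inv s1) (inv s2) (act s1 s2 y)" by simp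
  then show "x = y"
    using permutes_inv_o(1)[OF assms(1)] permutes_inv_o(1)[OF assms(2)]
    by (cases x, cases y) (simp add: act_def comp_assoc)
qed

lemma card_vimage_permutes: "s permutes D \<Longrightarrow> card (s -` A) = card A"
  by (rule card_vimage_inj) (auto dest: permutes_inj permutes_surj)

(* Permuting indices inside the window preserves the numbers of ones, so layers are invariant. *)
lemma act_in_layer:
  assumes "s1 permutes {..<r1}" "s2 permutes {..<r2}" "x \<in> layer r1 r2 k"
  shows "act s1 s2 x \<in> layer r1 r2 k"
proof -
  obtain A B where x: "x = cfg A B" "A \<subseteq> {..<r1}" "B \<subseteq> {..<r2}" "(card A, card B) = k"
    using assms(3) unfolding layer_def configs_eq by (auto simp: counts_cfg)
  have "s1 -` A \<subseteq> {..<r1}" "card (s1 -` A) = card A"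
    using x(2) permutes_vimage[OF assms(1)] card_vimage_permutes[OF assms(1)] by auto
  moreover have "s2 -` B \<subseteq> {..<r2}" "card (s2 -` B) = card B"
    using x(3) permutes_vimage[OF assms(2)] card_vimage_permutes[OF assms(2)] by auto
  ultimately show ?thesis
    using x unfolding layer_def configs_eq by (auto simp: act_cfg counts_cfg)
qed

lemma act_layer:
  assumes "s1 permutes {..<r1}" "s2 permutes {..<r2}"
  shows "act s1 s2 ` layer r1 r2 k = layer r1 r2 k"
proof
  show "act s1 s2 ` layer r1 r2 k \<subseteq> layer r1 r2 k" using act_in_layer[OF assms] by blast
  have "x = act s1 s2 (act (inv s1) (inv s2) x)" for x
    using permutes_inv_o(2)[OF assms(1)] permutes_inv_o(2)[OF assms(2)]
    by (cases x) (simp add: act_def comp_assoc)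
  then show "layer r1 r2 k \<subseteq> act s1 s2 ` layer r1 r2 k"
    using act_in_layer[OF permutes_inv[OF assms(1)] permutes_inv[OF assms(2)]] by blast
qed

lemma DFPE_urn:
  assumes "k1 \<le> r1" "k2 \<le> r2"
  shows "DFPE r1 r2 (urn r1 r2 (k1, k2))"
  unfolding DFPE_def
proof (intro conjI allI impI)
  show "set_pmf (urn r1 r2 (k1, k2)) \<subseteq> configs r1 r2"
    using set_pmf_urn[OF assms] unfolding layer_def by auto
  fix s1 s2 assume p: "s1 permutes {..<r1}" "s2 permutes {..<r2}"
  have "map_pmf (act s1 s2) (urn r1 r2 (k1, k2)) = urn r1 r2 (k1, k2)"
    unfolding urn_def using layer_nonempty[OF assms] finite_layer inj_act[OF p]
    by (subst map_pmf_of_set_inj) (auto simp: act_layer[OF p] intro: inj_on_subset)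
  then show "map_pmf (\<lambda>(a, b). (a \<circ> s1, b \<circ> s2)) (urn r1 r2 (k1, k2)) = urn r1 r2 (k1, k2)"
    by (simp add: act_def)
qed

lemma permutes_onto:
  assumes "finite D" "A \<subseteq> D" "B \<subseteq> D" "card A = card B"
  obtains s where "s permutes D" "s ` A = B"
proof -
  have fin: "finite A" "finite B" "finite (D - A)" "finite (D - B)"
    using assms finite_subset by auto
  obtain f where f: "bij_betw f A B" using finite_same_card_bij[OF fin(1,2) assms(4)] by blast
  have "card (D - A) = card (D - B)" using assms fin by (simp add: card_Diff_subset)
  then obtain g where g: "bij_betw g (D - A) (D - B)" using finite_same_card_bij fin(3,4) by blast
  define s where "s x = (if x \<in> A then f x else if x \<in> D then g x else x)" for x
  have sA: "bij_betw s A B" using f by (rule bij_betw_cong[THEN iffD1, rotated]) (simp add: s_def)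
  have "bij_betw s (D - A) (D - B)" using g by (rule bij_betw_cong[THEN iffD1, rotated]) (simp add: s_def)
  then have "bij_betw s (A \<union> (D - A)) (B \<union> (D - B))" by (intro bij_betw_combine[OF sA]) auto
  then have "bij_betw s D D" using assms by (simp add: Un_absorb1 Un_Diff_cancel)
  then have "s permutes D" by (rule bij_imp_permutes) (use assms in \<open>auto simp: s_def\<close>)
  moreover have "s ` A = B" using sA by (simp add: bij_betw_def)
  ultimately show ?thesis using that by blast
qed

lemma DFPE_prob_ones:
  assumes "DFPE n1 n2 p" "S1 \<subseteq> {..<n1}" "S2 \<subseteq> {..<n2}"
  shows "measure_pmf.prob p (ones S1 S2) = wcoord p (card S1) (card S2)"
proof -
  have "card S1 \<le> n1" "card S2 \<le> n2"
    using card_mono[OF _ assms(2)] card_mono[OF _ assms(3)] by auto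
  then obtain s1 s2 where s: "s1 permutes {..<n1}" "s1 ` {..<card S1} = S1"
    "s2 permutes {..<n2}" "s2 ` {..<card S2} = S2"
    using permutes_onto[of "{..<n1}" "{..<card S1}" S1] permutes_onto[of "{..<n2}" "{..<card S2}" S2]
      assms(2,3) by (metis card_lessThan finite_lessThan lessThan_subset_iff)
  have "wcoord p (card S1) (card S2)
      = measure_pmf.prob (map_pmf (act s1 s2) p) (ones {..<card S1} {..<card S2})"
    using DFPE_act[OF assms(1) s(1,3)] by (simp add: wcoord_ones)
  also have "\<dots> = measure_pmf.prob p (ones S1 S2)"
    by (simp add: measure_map_pmf act_preimage_ones s(2,4))
  finally show ?thesis by simp
qed

lemma DFPE_pmf_layer:
  assumes "DFPE r1 r2 q" "x \<in> layer r1 r2 k" "y \<in> layer r1 r2 k"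
  shows "pmf q x = pmf q y"
proof -
  obtain A B A' B' where xy: "x = cfg A B" "y = cfg A' B'"
    "A \<subseteq> {..<r1}" "B \<subseteq> {..<r2}" "A' \<subseteq> {..<r1}" "B' \<subseteq> {..<r2}"
    "card A' = card A" "card B' = card B"
    using assms(2,3) unfolding layer_def configs_eq by (auto simp: counts_cfg)
  obtain s1 s2 where s: "s1 permutes {..<r1}" "s1 ` A' = A" "s2 permutes {..<r2}" "s2 ` B' = B"
    using permutes_onto[of "{..<r1}" A' A] permutes_onto[of "{..<r2}" B' B] xy by (metis finite_lessThan)
  have "s1 -` A = A'" "s2 -` B = B'"
    using s inj_vimage_image_eq[OF permutes_inj[OF s(1)]] inj_vimage_image_eq[OF permutes_inj[OF s(3)]]
    by metis+
  then have "act s1 s2 x = y" using xy by (simp add: act_cfg)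
  then have "pmf q y = pmf (map_pmf (act s1 s2) q) (act s1 s2 x)"
    using DFPE_act[OF assms(1) s(1,3)] by simp
  also have "\<dots> = pmf q x" by (rule pmf_map_inj'[OF inj_act[OF s(1,3)]])
  finally show ?thesis by simp
qed


lemma prob_eq_sum_configs:
  assumes "set_pmf q \<subseteq> configs n1 n2"
  shows "measure_pmf.prob q E = sum (pmf q) (E \<inter> configs n1 n2)"
proof -
  have "measure_pmf.prob q E = measure_pmf.prob q (E \<inter> set_pmf q)"
    by (simp add: measure_Int_set_pmf)
  also have "E \<inter> set_pmf q = E \<inter> configs n1 n2 \<inter> set_pmf q" using assms by auto
  also have "measure_pmf.prob q \<dots> = measure_pmf.prob q (E \<inter> configs n1 n2)"
    by (simp add: measure_Int_set_pmf)
  also have "\<dots> = sum (pmf q) (E \<inter> configs n1 n2)"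
    using finite_configs by (simp add: measure_measure_pmf_finite)
  finally show ?thesis .
qed

definition zeros :: "nat \<Rightarrow> nat \<Rightarrow> (nat \<Rightarrow> bool) \<times> (nat \<Rightarrow> bool) \<Rightarrow> nat" where
  "zeros n1 n2 x = (n1 - fst (counts x)) + (n2 - snd (counts x))"

(* The cylinder of the ones of x contains x and otherwise only configurations with
   strictly fewer zeros; this drives the induction in the uniqueness lemma. *)
lemma zeros_less:
  assumes "x \<in> configs n1 n2" "y \<in> configs n1 n2" "y \<in> ones (Collect (fst x)) (Collect (snd x))" "y \<noteq> x"
  shows "zeros n1 n2 y < zeros n1 n2 x"
proof -
  obtain a b a' b' where xy: "x = (a, b)" "y = (a', b')" by (cases x, cases y)
  have sub: "Collect a \<subseteq> Collect a'" "Collect b \<subseteq> Collect b'"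
    using assms(3) xy unfolding ones_def by auto
  have win: "Collect a' \<subseteq> {..<n1}" "Collect b' \<subseteq> {..<n2}"
    using assms(2) xy by (auto simp: configs_iff)
  then have fin: "finite (Collect a')" "finite (Collect b')" by (auto intro: finite_subset)
  have "card (Collect a') \<le> n1" "card (Collect b') \<le> n2"
    using card_mono[OF _ win(1)] card_mono[OF _ win(2)] by auto
  moreover have "card (Collect a) \<le> card (Collect a')" "card (Collect b) \<le> card (Collect b')"
    using card_mono[OF fin(1) sub(1)] card_mono[OF fin(2) sub(2)] .
  moreover have "Collect a \<subset> Collect a' \<or> Collect b \<subset> Collect b'"
    using sub assms(4) xy by auto
  then have "card (Collect a) < card (Collect a') \<or> card (Collect b) < card (Collect b')"
    using psubset_card_mono[OF fin(1)] psubset_card_mono[OF fin(2)] by blast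
  ultimately show ?thesis unfolding zeros_def counts_def xy by auto
qed

(* A law on the configurations is determined by the probabilities of all cylinder events:
   the mass of x is the probability of the cylinder of its ones minus the masses of
   configurations with fewer zeros, which agree by induction. *)
lemma pmf_eqI_ones:
  assumes p: "set_pmf p \<subseteq> configs n1 n2" and p': "set_pmf p' \<subseteq> configs n1 n2"
    and eq: "\<And>S1 S2. S1 \<subseteq> {..<n1} \<Longrightarrow> S2 \<subseteq> {..<n2} \<Longrightarrow>
      measure_pmf.prob p (ones S1 S2) = measure_pmf.prob p' (ones S1 S2)"
  shows "p = p'"
proof -
  have "x \<in> configs n1 n2 \<longrightarrow> pmf p x = pmf p' x" for x
  proof (induction x rule: measure_induct_rule[of "zeros n1 n2"])
    case (less x)
    show ?case
    proof
      assume x: "x \<in> configs n1 n2"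
      define C where "C = ones (Collect (fst x)) (Collect (snd x))"
      define R where "R = C \<inter> configs n1 n2 - {x}"
      have C: "C \<inter> configs n1 n2 = insert x R" "x \<notin> R" "finite R"
        using x finite_configs unfolding R_def C_def ones_def by auto
      have "sum (pmf p) R = sum (pmf p') R"
        using less zeros_less[OF x] unfolding R_def C_def by (intro sum.cong) auto
      moreover have "Collect (fst x) \<subseteq> {..<n1}" "Collect (snd x) \<subseteq> {..<n2}"
        using x configs_iff[of "fst x" "snd x"] by simp_all
      then have "measure_pmf.prob p C = measure_pmf.prob p' C" unfolding C_def by (rule eq)
      then have "sum (pmf p) (C \<inter> configs n1 n2) = sum (pmf p') (C \<inter> configs n1 n2)"
        by (simp add: prob_eq_sum_configs[OF p] prob_eq_sum_configs[OF p'])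
      ultimately show "pmf p x = pmf p' x" using C by simp
    qed
  qed
  moreover have "pmf p x = pmf p' x" if "x \<notin> configs n1 n2" for x
  proof -
    have "x \<notin> set_pmf p" "x \<notin> set_pmf p'" using that p p' by auto
    then show ?thesis by (simp add: set_pmf_eq)
  qed
  ultimately show ?thesis by (intro pmf_eqI) blast
qed

lemma DFPE_eqI_wpoint:
  assumes "DFPE n1 n2 p" "DFPE n1 n2 p'" "wpoint n1 n2 p = wpoint n1 n2 p'"
  shows "p = p'"
proof (rule pmf_eqI_ones)
  show "set_pmf p \<subseteq> configs n1 n2" "set_pmf p' \<subseteq> configs n1 n2"
    using assms(1,2) unfolding DFPE_def by auto
  have w: "wcoord p l1 l2 = wcoord p' l1 l2" if "l1 \<le> n1" "l2 \<le> n2" for l1 l2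
  proof (cases "(l1, l2) \<in> idx n1 n2")
    case True
    then show ?thesis using fun_cong[OF assms(3), of "(l1, l2)"] by (simp add: wpoint_def)
  next
    case False
    then show ?thesis using that by (simp add: idx_def wcoord_def)
  qed
  fix S1 S2 assume S: "S1 \<subseteq> {..<n1}" "S2 \<subseteq> {..<n2}"
  then have "card S1 \<le> n1" "card S2 \<le> n2" using card_mono[OF _ S(1)] card_mono[OF _ S(2)] by auto
  then show "measure_pmf.prob p (ones S1 S2) = measure_pmf.prob p' (ones S1 S2)"
    using DFPE_prob_ones[OF assms(1) S] DFPE_prob_ones[OF assms(2) S] w by simp
qed


lemma configs_layers: "configs r1 r2 = (\<Union>k\<in>{..r1} \<times> {..r2}. layer r1 r2 k)"
proof (intro equalityI subsetI)
  fix x assume "x \<in> configs r1 r2"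
  then obtain A B where x: "x = cfg A B" "A \<subseteq> {..<r1}" "B \<subseteq> {..<r2}"
    unfolding configs_eq by auto
  then have "card A \<le> r1" "card B \<le> r2" using card_mono[of "{..<r1}" A] card_mono[of "{..<r2}" B] by auto
  moreover have "x \<in> layer r1 r2 (card A, card B)"
    using x unfolding layer_def configs_eq by (auto simp: counts_cfg)
  ultimately show "x \<in> (\<Union>k\<in>{..r1} \<times> {..r2}. layer r1 r2 k)" by auto
qed (auto simp: layer_def)

lemma DFPE_prob_Int_layer:
  assumes "DFPE r1 r2 q" "k1 \<le> r1" "k2 \<le> r2"
  shows "measure_pmf.prob q (E \<inter> layer r1 r2 (k1, k2))
           = measure_pmf.prob q (layer r1 r2 (k1, k2)) * measure_pmf.prob (urn r1 r2 (k1, k2)) E"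
proof -
  let ?L = "layer r1 r2 (k1, k2)"
  obtain x0 where x0: "x0 \<in> ?L" using layer_nonempty[OF assms(2,3)] by auto
  obtain c where const: "\<And>x. x \<in> ?L \<Longrightarrow> pmf q x = c"
    using DFPE_pmf_layer[OF assms(1) _ x0] by blast
  have prob_sub: "measure_pmf.prob q S = real (card S) * c" if "S \<subseteq> ?L" for S
  proof -
    have "finite S" using that finite_layer by (rule finite_subset)
    then have "measure_pmf.prob q S = sum (pmf q) S" by (rule measure_measure_pmf_finite)
    also have "\<dots> = sum (\<lambda>_. c) S" using that const by (intro sum.cong) auto
    finally show ?thesis by simp
  qed
  have "measure_pmf.prob (urn r1 r2 (k1, k2)) E = real (card (E \<inter> ?L)) / real (card ?L)"
    unfolding urn_def using x0 finite_layer[of r1 r2 "(k1, k2)"]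
    by (subst measure_pmf_of_set) (auto simp: Int_commute)
  moreover have "card ?L \<noteq> 0" using x0 finite_layer[of r1 r2 "(k1, k2)"] by auto
  ultimately show ?thesis using prob_sub[of "E \<inter> ?L"] prob_sub[of ?L] by simp
qed

lemma DFPE_mixture_of_urns:
  assumes "DFPE r1 r2 q"
  shows "measure_pmf.prob q E
           = (\<Sum>k\<in>{..r1} \<times> {..r2}. measure_pmf.prob q (layer r1 r2 k) * measure_pmf.prob (urn r1 r2 k) E)"
proof -
  let ?K = "{..r1} \<times> {..r2}"
  have sq: "set_pmf q \<subseteq> configs r1 r2" using assms unfolding DFPE_def by auto
  have disj: "(E \<inter> layer r1 r2 k) \<inter> (E \<inter> layer r1 r2 k') = {}" if "k \<noteq> k'" for k k'
    using that unfolding layer_def by auto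
  have "measure_pmf.prob q E = sum (pmf q) (\<Union>k\<in>?K. E \<inter> layer r1 r2 k)"
    unfolding prob_eq_sum_configs[OF sq] configs_layers by (simp only: Int_UN_distrib)
  also have "\<dots> = (\<Sum>k\<in>?K. sum (pmf q) (E \<inter> layer r1 r2 k))"
    using disj finite_layer by (intro sum.UNION_disjoint) auto
  also have "\<dots> = (\<Sum>k\<in>?K. measure_pmf.prob q (E \<inter> layer r1 r2 k))"
    using finite_layer by (intro sum.cong refl) (metis finite_Int measure_measure_pmf_finite)
  also have "\<dots> = (\<Sum>k\<in>?K. measure_pmf.prob q (layer r1 r2 k) * measure_pmf.prob (urn r1 r2 k) E)"
    using DFPE_prob_Int_layer[OF assms] by (intro sum.cong) auto
  finally show ?thesis .
qed


lemma restr_preimage_ones: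
  "l1 \<le> n1 \<Longrightarrow> l2 \<le> n2 \<Longrightarrow> restr n1 n2 -` ones {..<l1} {..<l2} = ones {..<l1} {..<l2}"
  unfolding restr_def ones_def by auto

(* Restriction commutes with permutations of the first n1 and n2 indices, so the
   (n1,n2)-marginal of an (r1,r2)-DFPE law is (n1,n2)-DFPE. *)
lemma DFPE_restr:
  assumes "n1 \<le> r1" "n2 \<le> r2" "DFPE r1 r2 q"
  shows "DFPE n1 n2 (map_pmf (restr n1 n2) q)"
  unfolding DFPE_def
proof (intro conjI allI impI)
  show "set_pmf (map_pmf (restr n1 n2) q) \<subseteq> configs n1 n2"
    by (auto simp: restr_def configs_def)
  fix s1 s2 assume s: "s1 permutes {..<n1}" "s2 permutes {..<n2}"
  have s': "s1 permutes {..<r1}" "s2 permutes {..<r2}"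
    using permutes_subset[OF s(1)] permutes_subset[OF s(2)] assms(1,2) by auto
  have "(s1 j < n1) = (j < n1)" "(s2 j < n2) = (j < n2)" for j
    using permutes_in_image[OF s(1), of j] permutes_in_image[OF s(2), of j] by simp_all
  then have comm: "act s1 s2 \<circ> restr n1 n2 = restr n1 n2 \<circ> act s1 s2"
    by (auto simp: act_def restr_def fun_eq_iff)
  have "map_pmf (act s1 s2) (map_pmf (restr n1 n2) q) = map_pmf (restr n1 n2) (map_pmf (act s1 s2) q)"
    by (simp add: pmf.map_comp comm)
  also have "\<dots> = map_pmf (restr n1 n2) q" using DFPE_act[OF assms(3) s'] by simp
  finally show "map_pmf (\<lambda>(a, b). (a \<circ> s1, b \<circ> s2)) (map_pmf (restr n1 n2) q) = map_pmf (restr n1 n2) q"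
    by (simp add: act_def)
qed

lemma prob_bind_pmf_finite:
  assumes "finite S" "set_pmf \<mu> \<subseteq> S"
  shows "measure_pmf.prob (bind_pmf \<mu> h) E = (\<Sum>x\<in>S. pmf \<mu> x * measure_pmf.prob (h x) E)"
proof -
  have "ennreal (measure_pmf.prob (bind_pmf \<mu> h) E)
      = (\<integral>\<^sup>+x. ennreal (measure_pmf.prob (h x) E) \<partial>measure_pmf \<mu>)"
    by (simp add: measure_pmf.emeasure_eq_measure[symmetric])
  also have "\<dots> = (\<Sum>x\<in>S. ennreal (measure_pmf.prob (h x) E) * pmf \<mu> x)"
    using assms by (intro nn_integral_measure_pmf_support) auto
  also have "\<dots> = ennreal (\<Sum>x\<in>S. pmf \<mu> x * measure_pmf.prob (h x) E)"
    by (simp add: ennreal_mult'' mult.commute sum_nonneg flip: sum_ennreal)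
  finally show ?thesis by (simp add: sum_nonneg)
qed

lemma DFPE_bind:
  assumes "\<And>x. x \<in> set_pmf \<mu> \<Longrightarrow> DFPE n1 n2 (h x)"
  shows "DFPE n1 n2 (bind_pmf \<mu> h)"
  unfolding DFPE_def
proof (intro conjI allI impI)
  show "set_pmf (bind_pmf \<mu> h) \<subseteq> configs n1 n2" using assms unfolding DFPE_def by auto
  fix s1 s2 assume s: "s1 permutes {..<n1}" "s2 permutes {..<n2}"
  have "map_pmf (act s1 s2) (bind_pmf \<mu> h) = bind_pmf \<mu> (\<lambda>x. map_pmf (act s1 s2) (h x))"
    by (rule map_bind_pmf)
  also have "\<dots> = bind_pmf \<mu> h"
    using DFPE_act[OF assms s] by (intro bind_pmf_cong) auto
  finally show "map_pmf (\<lambda>(a, b). (a \<circ> s1, b \<circ> s2)) (bind_pmf \<mu> h) = bind_pmf \<mu> h"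
    by (simp add: act_def)
qed

lemma lambdapt_eq_prob_urn:
  assumes "k1 \<le> r1" "k2 \<le> r2" "n1 \<le> r1" "n2 \<le> r2" "(l1, l2) \<in> idx n1 n2"
  shows "lambdapt n1 n2 k1 k2 r1 r2 (l1, l2) = measure_pmf.prob (urn r1 r2 (k1, k2)) (ones {..<l1} {..<l2})"
  using assms prob_urn_ones[OF assms(1,2), of l1 l2] unfolding lambdapt_def idx_def by auto

lemma sum_fun_apply: "(\<Sum>k\<in>K. f k) x = (\<Sum>k\<in>K. f k x)"
  by (induction K rule: infinite_finite_induct) auto

lemma wpoint_marginal_mixture:
  assumes "n1 \<le> r1" "n2 \<le> r2"
    and mix: "\<And>E. measure_pmf.prob q E = (\<Sum>k\<in>{..r1} \<times> {..r2}. c k * measure_pmf.prob (urn r1 r2 k) E)"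
  shows "wpoint n1 n2 (map_pmf (restr n1 n2) q)
           = (\<Sum>k\<in>{..r1} \<times> {..r2}. c k *\<^sub>R lambdapt n1 n2 (fst k) (snd k) r1 r2)"
proof
  fix l :: "nat \<times> nat"
  obtain l1 l2 where l: "l = (l1, l2)" by (cases l)
  show "wpoint n1 n2 (map_pmf (restr n1 n2) q) l
      = (\<Sum>k\<in>{..r1} \<times> {..r2}. c k *\<^sub>R lambdapt n1 n2 (fst k) (snd k) r1 r2) l"
  proof (cases "l \<in> idx n1 n2")
    case True
    then have "l1 \<le> n1" "l2 \<le> n2" unfolding l idx_def by auto
    then have "wpoint n1 n2 (map_pmf (restr n1 n2) q) l = measure_pmf.prob q (ones {..<l1} {..<l2})"
      using True by (simp add: l wpoint_def wcoord_ones measure_map_pmf restr_preimage_ones)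
    also have "\<dots> = (\<Sum>k\<in>{..r1} \<times> {..r2}. c k * lambdapt n1 n2 (fst k) (snd k) r1 r2 l)"
      unfolding mix l using lambdapt_eq_prob_urn[OF _ _ assms(1,2)] True l by (intro sum.cong) auto
    finally show ?thesis by (simp add: sum_fun_apply scaleR_fun_def)
  next
    case False
    then show ?thesis by (simp add: l wpoint_def lambdapt_def sum_fun_apply scaleR_fun_def)
  qed
qed

lemma convex_hull_image_weights:
  fixes f :: "'i \<Rightarrow> 'a::real_vector"
  assumes "finite K" "x \<in> convex hull (f ` K)"
  obtains c where "\<forall>k\<in>K. 0 \<le> c k" "sum c K = 1" "x = (\<Sum>k\<in>K. c k *\<^sub>R f k)"
proof -
  have "f ` K = (\<Union>k\<in>K. {f k})" by auto
  also have "convex hull \<dots> = {\<Sum>k\<in>K. c k *\<^sub>R s k |c s.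
      (\<forall>k\<in>K. 0 \<le> c k) \<and> sum c K = 1 \<and> (\<forall>k\<in>K. s k \<in> {f k})}"
    by (rule convex_hull_finite_union[OF assms(1)]) auto
  finally obtain c s where c: "\<forall>k\<in>K. 0 \<le> c k" "sum c K = 1" "\<forall>k\<in>K. s k = f k"
    "x = (\<Sum>k\<in>K. c k *\<^sub>R s k)"
    using assms(2) by auto
  then have "x = (\<Sum>k\<in>K. c k *\<^sub>R f k)" by simp
  then show ?thesis using that c(1,2) by blast
qed

lemma pmf_from_weights:
  assumes "finite K" "\<forall>k\<in>K. 0 \<le> c k" "sum c K = 1"
  obtains \<mu> where "set_pmf \<mu> \<subseteq> K" "\<forall>k\<in>K. pmf \<mu> k = c k"
proof -
  define f where "f k = (if k \<in> K then c k else 0)" for k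
  have nonneg: "0 \<le> f k" for k using assms(2) by (simp add: f_def)
  have "(\<integral>\<^sup>+k. ennreal (f k) \<partial>count_space UNIV) = (\<Sum>k\<in>K. ennreal (f k))"
    using assms(1) by (intro nn_integral_count_space') (auto simp: f_def)
  also have "\<dots> = ennreal (sum f K)" using nonneg by (simp add: sum_ennreal)
  also have "sum f K = 1" using assms(3) by (simp add: f_def)
  finally have pmf: "pmf (embed_pmf f) k = f k" for k by (intro pmf_embed_pmf nonneg) simp
  show ?thesis
    by (rule that[of "embed_pmf f"]) (auto simp: set_pmf_eq pmf f_def)
qed

lemma lambda_points_eq:
  "{lambdapt n1 n2 k1 k2 r1 r2 | k1 k2. k1 \<le> r1 \<and> k2 \<le> r2}
     = (\<lambda>k. lambdapt n1 n2 (fst k) (snd k) r1 r2) ` ({..r1} \<times> {..r2})"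
  by force

(* Necessity: the marginal of an (r1,r2)-DFPE law is a mixture of urn marginals. *)
lemma extendible_imp_in_hull:
  assumes "n1 \<le> r1" "n2 \<le> r2" "extendible n1 n2 r1 r2 p"
  shows "wpoint n1 n2 p \<in> convex hull {lambdapt n1 n2 k1 k2 r1 r2 | k1 k2. k1 \<le> r1 \<and> k2 \<le> r2}"
proof -
  let ?K = "{..r1} \<times> {..r2}"
  obtain q where q: "DFPE r1 r2 q" "p = map_pmf (restr n1 n2) q"
    using assms(3) unfolding extendible_def by auto
  define c where "c k = measure_pmf.prob q (layer r1 r2 k)" for k
  have mix: "measure_pmf.prob q E = (\<Sum>k\<in>?K. c k * measure_pmf.prob (urn r1 r2 k) E)" for E
    unfolding c_def by (rule DFPE_mixture_of_urns[OF q(1)])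
  have "sum c ?K = 1" using mix[of UNIV] by simp
  then have "(\<Sum>k\<in>?K. c k *\<^sub>R lambdapt n1 n2 (fst k) (snd k) r1 r2)
      \<in> convex hull ((\<lambda>k. lambdapt n1 n2 (fst k) (snd k) r1 r2) ` ?K)"
    by (intro convex_sum) (auto simp: c_def intro: hull_inc)
  then show ?thesis
    unfolding lambda_points_eq q(2) wpoint_marginal_mixture[OF assms(1,2) mix] .
qed

(* Sufficiency: the mixture of urn laws with the weights of the convex combination is an
   (r1,r2)-DFPE law whose marginal has the w-point of p, hence equals p. *)
lemma in_hull_imp_extendible:
  assumes "n1 \<le> r1" "n2 \<le> r2" "DFPE n1 n2 p"
    and "wpoint n1 n2 p \<in> convex hull {lambdapt n1 n2 k1 k2 r1 r2 | k1 k2. k1 \<le> r1 \<and> k2 \<le> r2}"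
  shows "extendible n1 n2 r1 r2 p"
proof -
  let ?K = "{..r1} \<times> {..r2}"
  obtain c where c: "\<forall>k\<in>?K. 0 \<le> c k" "sum c ?K = 1"
    "wpoint n1 n2 p = (\<Sum>k\<in>?K. c k *\<^sub>R lambdapt n1 n2 (fst k) (snd k) r1 r2)"
    using convex_hull_image_weights[of ?K] assms(4) unfolding lambda_points_eq by blast
  obtain \<mu> where \<mu>: "set_pmf \<mu> \<subseteq> ?K" "\<forall>k\<in>?K. pmf \<mu> k = c k"
    using pmf_from_weights[OF _ c(1,2)] by blast
  define q where "q = bind_pmf \<mu> (urn r1 r2)"
  have q: "DFPE r1 r2 q"
    unfolding q_def using \<mu>(1) DFPE_urn by (intro DFPE_bind) auto
  have "measure_pmf.prob q E = (\<Sum>k\<in>?K. c k * measure_pmf.prob (urn r1 r2 k) E)" for E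
    unfolding q_def using prob_bind_pmf_finite[OF _ \<mu>(1)] \<mu>(2) by simp
  then have "wpoint n1 n2 (map_pmf (restr n1 n2) q) = wpoint n1 n2 p"
    unfolding c(3) by (rule wpoint_marginal_mixture[OF assms(1,2)])
  then have "p = map_pmf (restr n1 n2) q"
    using DFPE_eqI_wpoint[OF assms(3) DFPE_restr[OF assms(1,2) q]] by simp
  then show ?thesis unfolding extendible_def using q by blast
qed

theorem mainTheorem4:
  fixes n1 n2 r1 r2 :: nat
    and p :: "((nat \<Rightarrow> bool) \<times> (nat \<Rightarrow> bool)) pmf"
  assumes "n1 \<le> r1" and "n2 \<le> r2"
    and "DFPE n1 n2 p"
  shows "extendible n1 n2 r1 r2 p \<longleftrightarrow>
    wpoint n1 n2 p \<in> convex hull {lambdapt n1 n2 k1 k2 r1 r2 | k1 k2. k1 \<le> r1 \<and> k2 \<le> r2}"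
  using extendible_imp_in_hull[OF assms(1,2)] in_hull_imp_extendible[OF assms] by blast

end
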